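(* Let $n$ be fixed and let $\nu_1^\star,\dots,\nu_n^\star\in\mathcal V$ and $\theta^\star=(\theta_1^\star,\dots,\theta_n^\star)$ be fixed (frequentist frame). Suppose Assumptions 1, 2 and 3 hold, and that for every $i\in\mathcal H_0$ and every $\delta>0$, $$\mathbb E_{\nu^\star}\Big[\Pi\big(\nu_i: d(\nu_i,\nu_i^\star)>\delta\mid U_1^K,\dots,U_n^K\big)\Big]\to0\quad\text{as }K\to\infty,$$ where $\Pi(\cdot\mid U_1^K,\dots,U_n^K)$ denotes the posterior of $\nu_i$ under the hierarchical model. Then $$\limsup_{K\to\infty}\max_{i\in\mathcal H_0}\sup_{\alpha\in[0,1]}\big|\mathbb P_{\nu^\star,\theta^\star}(P_i\le\alpha)-\alpha\big|=0.$$
   Context: Setup: for units $i=1,\dots,n$ with data depending on an information parameter $K\in\mathbb N$, the data of unit $i$ are summarized by a test statistic $T_i=T_i^K\in\mathbb R$ and a nuisance parameter statistic $U_i=U_i^K\in\mathcal U^K$ (the space may depend on $K$). Unit $i$ has a primary parameter $\theta_i$ and a nuisance parameter $\nu_i\in\mathcal V$ (not depending on $K$). Conditionally on parameters, the pairs $(T_i,U_i)$ are independent across $i$, the law of $(T_i,U_i)$ depends only on $(\theta_i,\nu_i)$, and the law of $U_i$ depends only on $\nu_i$. The hierarchical model used for inference posits $\nu_i\mid G$ i.i.d. $G$, $G\sim\Pi$. A null value $\theta_0$ is fixed, $\mathcal H_0=\{i:\theta_i^\star=\theta_0\}$. Partially Bayes p-value: $P_i:=\mathfrak P_i(T_i,(U_1,\dots,U_n);\Pi)$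 where $\mathfrak P_i(t,(u_1,\dots,u_n);\Pi):=\mathbb P_\Pi(|T_i|\ge|t|\mid U_1=u_1,\dots,U_n=u_n)$ under the joint hierarchical law with $\theta_i=\theta_0$. Oracle p-value function: $P^{\mathrm{or}}_K(t,u,\nu):=\mathbb P(|T_i^K|\ge|t|\mid U_i^K=u,\nu_i=\nu)$ under $\theta_i=\theta_0$. $\mathbb P_{\nu^\star,\theta^\star}$, $\mathbb E_{\nu^\star}$ denote probability/expectation with all parameters fixed at $\nu^\star,\theta^\star$ and only the data random. Assumption 1: for all $\nu,u$, the conditional law of $T_i$ given $\nu_i=\nu,U_i=u$ (under $\theta_i=\theta_0$) is absolutely continuous w.r.t. Lebesgue measure. Assumption 2: $\mathcal V$ is a compact metric space with metric $d$. Assumption 3: the family of functions $\nu\mapsto P^{\mathrm{or}}_K(t^K,u^K,\nu)$ from $\mathcal V$ to $[0,1]$, indexed by $K\in\mathbb N$, $t^K\in\mathbb R$, $u^K\in\mathcal U^K$, is uniformly equicontinuous. *)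

theory Defs
  imports "HOL-Probability.Probability"
begin

text \<open>Oracle p-value function: P(|T| >= |t| | U = u, nu) under theta = theta0,
  computed from the conditional law condT K nu u of T given (nu, U = u).\<close>
definition oracle_pval :: "(nat \<Rightarrow> 'v \<Rightarrow> 'u \<Rightarrow> real measure) \<Rightarrow> nat \<Rightarrow> real \<Rightarrow> 'u \<Rightarrow> 'v \<Rightarrow> real" where
  "oracle_pval condT K t u \<nu> = measure (condT K \<nu> u) {s. \<bar>t\<bar> \<le> \<bar>s\<bar>}"

text \<open>Law of U_i given nu_i (it does not depend on theta_i).\<close>
definition Umarg :: "(nat \<Rightarrow> 'th \<Rightarrow> 'v \<Rightarrow> (real \<times> 'u) measure) \<Rightarrow> (nat \<Rightarrow> 'u measure) \<Rightarrow> 'th \<Rightarrow> nat \<Rightarrow> 'v \<Rightarrow> 'u measure" where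
  "Umarg kern MU \<theta>0 K \<nu> = distr (kern K \<theta>0 \<nu>) (MU K) snd"

definition hier_prior :: "'v measure measure \<Rightarrow> nat \<Rightarrow> (nat \<Rightarrow> 'v) measure" where
  "hier_prior Prior n = Prior \<bind> (\<lambda>G. PiM {..<n} (\<lambda>_. G))"

definition hier_margU :: "(nat \<Rightarrow> 'th \<Rightarrow> 'v \<Rightarrow> (real \<times> 'u) measure) \<Rightarrow> (nat \<Rightarrow> 'u measure) \<Rightarrow> 'th
    \<Rightarrow> 'v measure measure \<Rightarrow> nat \<Rightarrow> nat \<Rightarrow> (nat \<Rightarrow> 'u) measure" where
  "hier_margU kern MU \<theta>0 Prior n K =
     hier_prior Prior n \<bind> (\<lambda>\<nu>. PiM {..<n} (\<lambda>j. Umarg kern MU \<theta>0 K (\<nu> j)))"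

definition is_posterior_version :: "(nat \<Rightarrow> 'th \<Rightarrow> 'v \<Rightarrow> (real \<times> 'u) measure) \<Rightarrow> (nat \<Rightarrow> 'u measure) \<Rightarrow> 'th
    \<Rightarrow> 'v measure \<Rightarrow> 'v measure measure \<Rightarrow> nat \<Rightarrow> nat \<Rightarrow> nat \<Rightarrow> ((nat \<Rightarrow> 'u) \<Rightarrow> 'v measure) \<Rightarrow> bool" where
  "is_posterior_version kern MU \<theta>0 MV Prior n K i post \<longleftrightarrow>
     post \<in> PiM {..<n} (\<lambda>_. MU K) \<rightarrow>\<^sub>M prob_algebra MV \<and>
     (\<forall>A \<in> sets MV. \<forall>B \<in> sets (PiM {..<n} (\<lambda>_. MU K)).
        (\<integral>\<^sup>+ \<nu>. indicator A (\<nu> i) * emeasure (PiM {..<n} (\<lambda>j. Umarg kern MU \<theta>0 K (\<nu> j))) B \<partial>hier_prior Prior n)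
      = (\<integral>\<^sup>+ u. indicator B u * emeasure (post u) A \<partial>hier_margU kern MU \<theta>0 Prior n K))"

text \<open>Partially Bayes p-value function P_Pi(|T_i| >= |t| | U = u), in the version induced by the
  posterior version post of nu_i and the oracle conditional law of T_i given (nu_i, U_i).\<close>
definition pB_pval :: "(nat \<Rightarrow> 'v \<Rightarrow> 'u \<Rightarrow> real measure) \<Rightarrow> ((nat \<Rightarrow> 'u) \<Rightarrow> 'v measure) \<Rightarrow> nat \<Rightarrow> nat
    \<Rightarrow> real \<Rightarrow> (nat \<Rightarrow> 'u) \<Rightarrow> real" where
  "pB_pval condT post K i t u = (\<integral>\<nu>. oracle_pval condT K t (u i) \<nu> \<partial>post u)"

definition data_law :: "(nat \<Rightarrow> 'th \<Rightarrow> 'v \<Rightarrow> (real \<times> 'u) measure) \<Rightarrow> nat \<Rightarrow> (nat \<Rightarrow> 'th) \<Rightarrow> (nat \<Rightarrow> 'v)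
    \<Rightarrow> nat \<Rightarrow> (nat \<Rightarrow> real \<times> 'u) measure" where
  "data_law kern n \<theta>s \<nu>s K = PiM {..<n} (\<lambda>j. kern K (\<theta>s j) (\<nu>s j))"

definition Uvec :: "nat \<Rightarrow> (nat \<Rightarrow> real \<times> 'u) \<Rightarrow> nat \<Rightarrow> 'u" where
  "Uvec n \<omega> = (\<lambda>j\<in>{..<n}. snd (\<omega> j))"

end

theory Submission
  imports Defs
begin

text \<open>For a null unit the oracle p-value at the true nuisance parameter is exactly uniform: given
  \<open>U\<^sub>i\<close> it is the two-sided tail probability of an atomless law evaluated at its own sample. The
  partially Bayes p-value is the posterior average of \<open>\<nu> \<mapsto> P\<^sup>o\<^sup>r(T\<^sub>i, U\<^sub>i, \<nu>)\<close>; by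
  equicontinuity it differs from the oracle p-value by at most \<open>\<epsilon>\<close> plus the posterior mass \<open>B\<close> outside
  a \<open>\<delta>\<close>-ball around \<open>\<nu>\<^sub>i\<^sup>\<star>\<close>. Sandwiching its distribution function between shifted uniform
  ones and bounding \<open>P(B \<ge> \<eta>) \<le> E B / \<eta>\<close> by Markov's inequality gives a calibration error of
  at most \<open>\<epsilon> + \<eta> + E B / \<eta>\<close>, uniformly in \<open>\<alpha>\<close>; posterior concentration makes \<open>E B\<close> vanish.\<close>

section \<open>Tail p-values of atomless laws\<close>

lemma antimono_sublevel_eq_atLeast:
  fixes F :: "real \<Rightarrow> real"
  assumes cont: "continuous_on UNIV F" and anti: "antimono F"
    and reached: "F x1 \<le> \<alpha>" and exceeded: "\<alpha> < F x0"
  obtains c where "{x. F x \<le> \<alpha>} = {c..}" and "F c = \<alpha>"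
proof -
  define L where "L = {x. F x \<le> \<alpha>}"
  have L_above: "x0 < x" if "x \<in> L" for x
    using that exceeded anti[THEN antimonoD, of x x0] by (force simp: L_def)
  have "closed L"
    unfolding L_def by (rule closed_Collect_le) (use cont in auto)
  moreover have "bdd_below L"
    unfolding bdd_below_def using L_above by (auto intro!: exI[of _ x0] less_imp_le)
  moreover have "L \<noteq> {}"
    using reached by (auto simp: L_def)
  ultimately have "Inf L \<in> L"
    by (intro closed_contains_Inf)
  have L_eq: "L = {Inf L..}"
  proof safe
    show "x \<in> L \<Longrightarrow> Inf L \<le> x" for x
      using \<open>bdd_below L\<close> by (simp add: cInf_lower)
    show "Inf L \<le> x \<Longrightarrow> x \<in> L" for x
      using \<open>Inf L \<in> L\<close> anti[THEN antimonoD, of "Inf L" x] by (auto simp: L_def)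
  qed
  have "x0 < Inf L"
    using L_above[OF \<open>Inf L \<in> L\<close>] .
  then obtain y where y: "x0 \<le> y" "y \<le> Inf L" "F y = \<alpha>"
    using IVT2'[of F "Inf L" \<alpha> x0] \<open>Inf L \<in> L\<close> exceeded continuous_on_subset[OF cont subset_UNIV]
    unfolding L_def by auto
  have "Inf L \<le> y"
    using L_eq y(3) by (auto simp: L_def)
  then show ?thesis
    using that L_eq y by (simp add: L_def)
qed

lemma
  fixes \<mu> :: "real measure"
  assumes "prob_space \<mu>" and sets_\<mu>: "sets \<mu> = sets borel" and ac: "absolutely_continuous lborel \<mu>"
  shows continuous_on_measure_abs_ge: "continuous_on UNIV (\<lambda>x. measure \<mu> {s. x \<le> \<bar>s\<bar>})"
    and tendsto_measure_abs_ge_at_top: "((\<lambda>x. measure \<mu> {s. x \<le> \<bar>s\<bar>}) \<longlongrightarrow> 0) at_top"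
proof -
  interpret prob_space \<mu> by fact
  have space_\<mu>: "space \<mu> = UNIV"
    using sets_eq_imp_space_eq[OF sets_\<mu>] by simp
  have abs_meas: "abs \<in> \<mu> \<rightarrow>\<^sub>M borel"
    by (simp add: measurable_cong_sets[OF sets_\<mu> refl])
  define N where "N = distr \<mu> borel abs"
  interpret N: real_distribution N
    unfolding real_distribution_def real_distribution_axioms_def N_def
    using prob_space_distr[OF abs_meas] by simp
  have measure_N: "measure N A = measure \<mu> {s. \<bar>s\<bar> \<in> A}" if "A \<in> sets borel" for A
    unfolding N_def using that by (subst measure_distr) (auto simp: abs_meas space_\<mu> vimage_def)
  have no_atoms: "measure N {x} = 0" for x
  proof -
    have "{s. \<bar>s\<bar> = x} \<in> null_sets lborel"
      by (rule null_sets_subset[of "{x, -x}"]) (auto simp: countable_imp_null_set_lborel)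
    then show ?thesis
      using ac measure_N[of "{x}"] by (auto simp: absolutely_continuous_def measure_eq_0_null_sets)
  qed
  have cdf_eq: "measure \<mu> {s. x \<le> \<bar>s\<bar>} = 1 - cdf N x" for x
  proof -
    have "measure \<mu> {s. x \<le> \<bar>s\<bar>} = measure N {x..}"
      using measure_N[of "{x..}"] by simp
    also have "\<dots> = measure N {x<..}"
    proof -
      have "{x..} = {x} \<union> {x<..}"
        by auto
      then show ?thesis
        using N.finite_measure_Union[of "{x}" "{x<..}"] no_atoms[of x] by simp
    qed
    also have "\<dots> = 1 - cdf N x"
      using N.prob_compl[of "{..x}"]
      by (simp add: cdf_def N.space_eq_univ Compl_eq_Diff_UNIV[symmetric] compl_le_swap2 not_le)
    finally show ?thesis .
  qed
  show "continuous_on UNIV (\<lambda>x. measure \<mu> {s. x \<le> \<bar>s\<bar>})"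
    unfolding cdf_eq using N.isCont_cdf no_atoms
    by (intro continuous_at_imp_continuous_on ballI continuous_intros) auto
  show "((\<lambda>x. measure \<mu> {s. x \<le> \<bar>s\<bar>}) \<longlongrightarrow> 0) at_top"
    unfolding cdf_eq using tendsto_diff[OF tendsto_const[of 1] N.cdf_lim_at_top_prob] by simp
qed

lemma measure_tail_pval_le:
  fixes \<mu> :: "real measure"
  assumes "prob_space \<mu>" and sets_\<mu>: "sets \<mu> = sets borel"
    and ac: "absolutely_continuous lborel \<mu>" and "0 \<le> \<alpha>" "\<alpha> \<le> 1"
  shows "measure \<mu> {t. measure \<mu> {s. \<bar>t\<bar> \<le> \<bar>s\<bar>} \<le> \<alpha>} = \<alpha>"
proof -
  interpret prob_space \<mu> by fact
  define F where "F x = measure \<mu> {s. x \<le> \<bar>s\<bar>}" for x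
  have space_\<mu>: "space \<mu> = UNIV"
    using sets_eq_imp_space_eq[OF sets_\<mu>] by simp
  have F_cont: "continuous_on UNIV F"
    unfolding F_def[abs_def] by (rule continuous_on_measure_abs_ge[OF assms(1-3)])
  have F_lim: "(F \<longlongrightarrow> 0) at_top"
    unfolding F_def[abs_def] by (rule tendsto_measure_abs_ge_at_top[OF assms(1-3)])
  have F_anti: "antimono F"
    unfolding F_def by (intro antimonoI finite_measure_mono) (auto simp: sets_\<mu>)
  have F_0: "F 0 = 1"
    using prob_space by (simp add: F_def space_\<mu>)
  have pval_set: "{t. measure \<mu> {s. \<bar>t\<bar> \<le> \<bar>s\<bar>} \<le> \<alpha>} = abs -` {x. F x \<le> \<alpha>}"
    by (auto simp: F_def)
  consider "\<alpha> = 1" | "\<alpha> < 1" "\<exists>x. F x \<le> \<alpha>" | "\<alpha> < 1" "\<forall>x. \<alpha> < F x"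
    using \<open>\<alpha> \<le> 1\<close> by (meson linorder_not_le order_le_less)
  then show ?thesis
  proof cases
    case 1
    then show ?thesis
      using prob_space by (simp add: space_\<mu>)
  next
    case 2
    then obtain c where "{x. F x \<le> \<alpha>} = {c..}" "F c = \<alpha>"
      using antimono_sublevel_eq_atLeast[OF F_cont F_anti, of _ \<alpha> 0] F_0 by auto
    then show ?thesis
      unfolding pval_set by (simp add: F_def vimage_def)
  next
    case 3
    have "\<alpha> = 0"
    proof (rule ccontr)
      assume "\<alpha> \<noteq> 0"
      then have "eventually (\<lambda>x. F x < \<alpha>) at_top"
        using F_lim \<open>0 \<le> \<alpha>\<close> by (intro order_tendstoD) auto
      then show False
        using 3 by (auto simp: eventually_at_top_linorder dest: less_asym)
    qed
    moreover have "{x. F x \<le> \<alpha>} = {}"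
      using 3 by (simp add: set_eq_iff not_le)
    ultimately show ?thesis
      unfolding pval_set by simp
  qed
qed

section \<open>Disintegration of a joint law\<close>

lemma emeasure_bind_Pair:
  assumes c: "c \<in> MU \<rightarrow>\<^sub>M prob_algebra MT" and U: "sets U = sets MU" "space U \<noteq> {}"
    and X: "X \<in> sets (MT \<Otimes>\<^sub>M MU)"
  shows "emeasure (U \<bind> (\<lambda>u. distr (c u) (MT \<Otimes>\<^sub>M MU) (\<lambda>t. (t, u)))) X
    = (\<integral>\<^sup>+ u. emeasure (c u) {t. (t, u) \<in> X} \<partial>U)"
proof (rule trans[OF emeasure_bind[OF U(2) _ X] nn_integral_cong])
  show "(\<lambda>u. distr (c u) (MT \<Otimes>\<^sub>M MU) (\<lambda>t. (t, u))) \<in> U \<rightarrow>\<^sub>M subprob_algebra (MT \<Otimes>\<^sub>M MU)"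
    unfolding measurable_cong_sets[OF U(1) refl]
    by (rule measurable_distr2[OF _ measurable_prob_algebraD[OF c]]) measurable
  fix u assume "u \<in> space U"
  then have u: "u \<in> space MU"
    using sets_eq_imp_space_eq[OF U(1)] by simp
  have sets_c: "sets (c u) = sets MT"
    using measurable_space[OF c u] by (simp add: space_prob_algebra)
  have "(\<lambda>t. (t, u)) \<in> c u \<rightarrow>\<^sub>M MT \<Otimes>\<^sub>M MU"
    using u by (simp add: measurable_cong_sets[OF sets_c refl])
  moreover have "(\<lambda>t. (t, u)) -` X \<inter> space (c u) = {t. (t, u) \<in> X}"
    using sets.sets_into_space[OF X] sets_eq_imp_space_eq[OF sets_c] by (auto simp: space_pair_measure)
  ultimately show "emeasure (distr (c u) (MT \<Otimes>\<^sub>M MU) (\<lambda>t. (t, u))) X = emeasure (c u) {t. (t, u) \<in> X}"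
    using X by (simp add: emeasure_distr)
qed

lemma emeasure_disintegration:
  fixes M :: "('t \<times> 'u) measure" and c :: "'u \<Rightarrow> 't measure"
  assumes M: "M \<in> space (prob_algebra (MT \<Otimes>\<^sub>M MU))"
    and c: "c \<in> MU \<rightarrow>\<^sub>M prob_algebra MT"
    and rectangles: "\<And>A B. A \<in> sets MT \<Longrightarrow> B \<in> sets MU \<Longrightarrow>
       emeasure M (A \<times> B) = (\<integral>\<^sup>+ u. indicator B u * emeasure (c u) A \<partial>distr M MU snd)"
    and E: "E \<in> sets (MT \<Otimes>\<^sub>M MU)"
  shows "emeasure M E = (\<integral>\<^sup>+ u. emeasure (c u) {t. (t, u) \<in> E} \<partial>distr M MU snd)"
proof -
  have sets_M: "sets M = sets (MT \<Otimes>\<^sub>M MU)" and "prob_space M"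
    using M by (auto simp: space_prob_algebra)
  define U where "U = distr M MU snd"
  have "prob_space U"
    unfolding U_def using \<open>prob_space M\<close>
    by (rule prob_space.prob_space_distr) (simp add: measurable_cong_sets[OF sets_M refl])
  then have "space U \<noteq> {}"
    by (rule prob_space.not_empty)
  have sets_U: "sets U = sets MU"
    by (simp add: U_def)
  define Q where "Q = U \<bind> (\<lambda>u. distr (c u) (MT \<Otimes>\<^sub>M MU) (\<lambda>t. (t, u)))"
  note emeasure_Q = emeasure_bind_Pair[OF c sets_U \<open>space U \<noteq> {}\<close>, folded Q_def]
  let ?G = "{A \<times> B |A B. A \<in> sets MT \<and> B \<in> sets MU}"
  have "M = Q"
  proof (rule measure_eqI_generator_eq[OF Int_stable_pair_measure_generator[of MT MU]])
    show "?G \<subseteq> Pow (space MT \<times> space MU)"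
      using sets.space_closed[of MT] sets.space_closed[of MU] by auto
    show "sets M = sigma_sets (space MT \<times> space MU) ?G"
      using sets_M sets_pair_measure by metis
    have "sets Q = sets (MT \<Otimes>\<^sub>M MU)"
      unfolding Q_def by (rule sets_bind) (auto simp: \<open>space U \<noteq> {}\<close>)
    then show "sets Q = sigma_sets (space MT \<times> space MU) ?G"
      using sets_pair_measure by metis
    show "range (\<lambda>_. space MT \<times> space MU) \<subseteq> ?G"
      by blast
    show "emeasure M (space MT \<times> space MU) \<noteq> \<infinity>" for i :: nat
      using \<open>prob_space M\<close> by (simp add: prob_space_def finite_measure.emeasure_finite)
    fix X assume "X \<in> ?G"
    then obtain A B where X: "X = A \<times> B" "A \<in> sets MT" "B \<in> sets MU"
      by auto
    have "emeasure Q X = (\<integral>\<^sup>+ u. indicator B u * emeasure (c u) A \<partial>U)"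
      using X by (subst emeasure_Q) (auto intro!: nn_integral_cong simp: indicator_def)
    then show "emeasure M X = emeasure Q X"
      using rectangles[OF X(2,3)] X(1) by (simp add: U_def)
  qed simp
  then show ?thesis
    using emeasure_Q[OF E] by (simp add: U_def)
qed

section \<open>Integrands continuous in a compact parameter\<close>

lemma compact_finite_net_list:
  fixes V :: "'v::metric_space set"
  assumes "compact V" "V \<noteq> {}" "r > 0"
  shows "\<exists>cs. cs \<noteq> [] \<and> set cs \<subseteq> V \<and> (\<forall>\<nu>\<in>V. \<exists>k<length cs. dist \<nu> (cs ! k) < r)"
proof -
  obtain C where C: "C \<subseteq> V" "finite C" "V \<subseteq> (\<Union>c\<in>C. ball c r)"
    using compactE_image[OF assms(1), of V "\<lambda>c. ball c r"] assms(3) by force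
  obtain cs where cs: "set cs = C"
    using finite_list[OF C(2)] by blast
  have "\<exists>k<length cs. dist \<nu> (cs ! k) < r" if "\<nu> \<in> V" for \<nu>
    using that C(3) by (fastforce simp: cs[symmetric] in_set_conv_nth dist_commute)
  then show ?thesis
    using cs C(1,3) assms(2) by (intro exI[of _ cs]) auto
qed

lemma compact_obtains_measurable_approx:
  fixes V :: "'v::metric_space set"
  assumes "compact V" "V \<noteq> {}"
  obtains sel :: "nat \<Rightarrow> 'v \<Rightarrow> nat" and point :: "nat \<Rightarrow> nat \<Rightarrow> 'v"
  where "\<And>m. sel m \<in> restrict_space borel V \<rightarrow>\<^sub>M count_space UNIV"
    and "\<And>m k. point m k \<in> V"
    and "\<And>\<nu>. \<nu> \<in> V \<Longrightarrow> (\<lambda>m. point m (sel m \<nu>)) \<longlonglongrightarrow> \<nu>"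
proof -
  have "\<forall>m. \<exists>cs. cs \<noteq> [] \<and> set cs \<subseteq> V \<and> (\<forall>\<nu>\<in>V. \<exists>k<length cs. dist \<nu> (cs ! k) < 1 / Suc m)"
    using compact_finite_net_list[OF assms] by simp
  then obtain net where net_ne: "\<And>m. net m \<noteq> []" and net_V: "\<And>m. set (net m) \<subseteq> V"
    and net_dense: "\<And>m \<nu>. \<nu> \<in> V \<Longrightarrow> \<exists>k<length (net m). dist \<nu> (net m ! k) < 1 / Suc m"
    unfolding choice_iff by blast
  define point where "point m k = net m ! min k (length (net m) - 1)" for m k
  define near where "near m \<nu> k \<longleftrightarrow> dist \<nu> (net m ! k) < 1 / Suc m" for m \<nu> k
  define sel where "sel m \<nu> = (LEAST k. near m \<nu> k)" for m \<nu>
  have point_V: "point m k \<in> V" for m k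
  proof -
    have "min k (length (net m) - 1) < length (net m)"
      using net_ne[of m] by (cases "net m") auto
    then show ?thesis
      unfolding point_def using nth_mem net_V[of m] by blast
  qed
  have "(\<lambda>\<nu>. dist \<nu> (net m ! k)) \<in> borel_measurable (restrict_space borel V)" for m k
    by (intro borel_measurable_continuous_on_restrict continuous_intros)
  then have sel_meas: "sel m \<in> restrict_space borel V \<rightarrow>\<^sub>M count_space UNIV" for m
    unfolding sel_def near_def by measurable
  have sel_near: "dist (point m (sel m \<nu>)) \<nu> \<le> inverse (real (Suc m))" if \<nu>: "\<nu> \<in> V" for m \<nu>
  proof -
    obtain k where k: "k < length (net m)" "near m \<nu> k"
      using net_dense[OF \<nu>] by (auto simp: near_def)
    then have "sel m \<nu> \<le> k" "near m \<nu> (sel m \<nu>)"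
      unfolding sel_def by (auto intro: Least_le LeastI)
    then show ?thesis
      using k(1) by (simp add: point_def near_def dist_commute inverse_eq_divide)
  qed
  have point_lim: "(\<lambda>m. point m (sel m \<nu>)) \<longlonglongrightarrow> \<nu>" if \<nu>: "\<nu> \<in> V" for \<nu>
  proof (rule tendsto_dist_iff[THEN iffD2],
      rule tendsto_sandwich[of "\<lambda>_. 0" _ _ "\<lambda>m. inverse (real (Suc m))"])
    show "\<forall>\<^sub>F m in sequentially. dist (point m (sel m \<nu>)) \<nu> \<le> inverse (real (Suc m))"
      using sel_near[OF \<nu>] by simp
  qed (simp_all add: LIMSEQ_inverse_real_of_nat del: of_nat_Suc)
  show ?thesis
    by (rule that[of sel point, OF sel_meas point_V point_lim])
qed

lemma borel_measurable_continuous_on_compact_param: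
  fixes g :: "'x \<Rightarrow> 'v::metric_space \<Rightarrow> real" and V :: "'v set"
  assumes V: "compact V" "V \<noteq> {}"
    and meas: "\<And>c. c \<in> V \<Longrightarrow> (\<lambda>x. g x c) \<in> borel_measurable M"
    and cont: "\<And>x. x \<in> space M \<Longrightarrow> continuous_on V (g x)"
  shows "(\<lambda>(x, \<nu>). g x \<nu>) \<in> borel_measurable (M \<Otimes>\<^sub>M restrict_space borel V)"
proof -
  let ?MV = "restrict_space borel V"
  obtain sel :: "nat \<Rightarrow> 'v \<Rightarrow> nat" and point where sel: "\<And>m. sel m \<in> ?MV \<rightarrow>\<^sub>M count_space UNIV"
    and point_V: "\<And>m k. point m k \<in> V"
    and point_lim: "\<And>\<nu>. \<nu> \<in> V \<Longrightarrow> (\<lambda>m. point m (sel m \<nu>)) \<longlonglongrightarrow> \<nu>"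
    using compact_obtains_measurable_approx[OF V] by blast
  define h where "h m = (\<lambda>(x, \<nu>). g x (point m (sel m \<nu>)))" for m
  have "h m \<in> borel_measurable (M \<Otimes>\<^sub>M ?MV)" for m
    unfolding h_def case_prod_beta
    by (rule measurable_compose_countable'[where f="\<lambda>k p. g (fst p) (point m k)" and I=UNIV])
      (auto intro: measurable_compose[OF measurable_fst meas[OF point_V]] measurable_compose[OF measurable_snd sel])
  then show ?thesis
  proof (rule borel_measurable_LIMSEQ_real[rotated])
    fix p assume "p \<in> space (M \<Otimes>\<^sub>M ?MV)"
    then obtain x \<nu> where p: "p = (x, \<nu>)" and x: "x \<in> space M" and \<nu>: "\<nu> \<in> V"
      by (cases p) (simp add: space_pair_measure space_restrict_space)
    have "(\<forall>m. point m (sel m \<nu>) \<in> V) \<and> (\<lambda>m. point m (sel m \<nu>)) \<longlonglongrightarrow> \<nu>"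
      using point_V point_lim[OF \<nu>] by blast
    then have "(g x \<circ> (\<lambda>m. point m (sel m \<nu>))) \<longlonglongrightarrow> g x \<nu>"
      by (rule continuous_on_sequentially[THEN iffD1, OF cont[OF x], rule_format, OF \<nu>])
    then show "(\<lambda>m. h m p) \<longlonglongrightarrow> (\<lambda>(x, \<nu>). g x \<nu>) p"
      by (simp add: h_def p o_def)
  qed
qed

lemma borel_measurable_kernel_integral_continuous:
  fixes g :: "'x \<Rightarrow> 'v::metric_space \<Rightarrow> real"
  assumes V: "compact V" "V \<noteq> {}"
    and meas: "\<And>c. c \<in> V \<Longrightarrow> (\<lambda>x. g x c) \<in> borel_measurable M"
    and cont: "\<And>x. x \<in> space M \<Longrightarrow> continuous_on V (g x)"
    and nonneg: "\<And>x \<nu>. x \<in> space M \<Longrightarrow> \<nu> \<in> V \<Longrightarrow> 0 \<le> g x \<nu>"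
    and L: "L \<in> M \<rightarrow>\<^sub>M prob_algebra (restrict_space borel V)"
  shows "(\<lambda>x. \<integral>\<nu>. g x \<nu> \<partial>L x) \<in> borel_measurable M"
proof -
  \<comment> \<open>The Giry monad measures parametrised kernel integrals only for nonnegative integrands,
    hence the detour through \<open>enn2real\<close>.\<close>
  have "(\<lambda>(x, \<nu>). ennreal (g x \<nu>)) \<in> borel_measurable (M \<Otimes>\<^sub>M restrict_space borel V)"
    using measurable_compose[OF borel_measurable_continuous_on_compact_param[OF V meas cont] measurable_ennreal]
    by (simp add: case_prod_beta)
  then have nn_integral_meas: "(\<lambda>x. \<integral>\<^sup>+\<nu>. ennreal (g x \<nu>) \<partial>L x) \<in> borel_measurable M"
    by (rule nn_integral_measurable_subprob_algebra2[OF _ measurable_prob_algebraD[OF L]])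
  show ?thesis
  proof (rule measurable_cong[THEN iffD1, OF _ borel_measurable_enn2real[OF nn_integral_meas]])
    fix x assume x: "x \<in> space M"
    have sets_L: "sets (L x) = sets (restrict_space borel V)"
      using measurable_space[OF L x] by (simp add: space_prob_algebra)
    have "g x \<in> borel_measurable (L x)"
      using borel_measurable_continuous_on_restrict[OF cont[OF x]]
      by (subst measurable_cong_sets[OF sets_L refl])
    moreover have "space (L x) = V"
      using sets_eq_imp_space_eq[OF sets_L] by (simp add: space_restrict_space)
    ultimately show "enn2real (\<integral>\<^sup>+\<nu>. ennreal (g x \<nu>) \<partial>L x) = (\<integral>\<nu>. g x \<nu> \<partial>L x)"
      using nonneg[OF x] by (intro enn2real_nn_integral_eq_integral) auto
  qed
qed

section \<open>Perturbations of uniform p-values\<close>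

lemma (in prob_space) abs_expectation_diff_le:
  assumes f: "integrable M f" and S: "S \<in> events"
    and close: "\<And>x. x \<in> space M \<Longrightarrow> \<bar>f x - c\<bar> \<le> \<epsilon> + indicator S x"
  shows "\<bar>expectation f - c\<bar> \<le> \<epsilon> + prob S"
proof -
  have S_int: "integrable M (indicator S :: _ \<Rightarrow> real)"
    using S by (simp add: emeasure_finite less_top[symmetric])
  have "\<bar>expectation f - c\<bar> = \<bar>expectation (\<lambda>x. f x - c)\<bar>"
    using f by (simp add: prob_space)
  also have "\<dots> \<le> expectation (\<lambda>x. \<bar>f x - c\<bar>)"
    by (rule integral_abs_bound)
  also have "\<dots> \<le> expectation (\<lambda>x. \<epsilon> + indicator S x)"
    using f S_int close by (intro integral_mono) auto
  also have "\<dots> = \<epsilon> + prob S"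
    using S_int S by (simp add: prob_space Int_absorb2 sets.sets_into_space)
  finally show ?thesis .
qed

lemma (in prob_space) prob_le_perturbed_uniform:
  assumes [measurable]: "X \<in> borel_measurable M" "Y \<in> borel_measurable M"
    and B_int: "integrable M B" and B_nonneg: "\<And>\<omega>. \<omega> \<in> space M \<Longrightarrow> 0 \<le> B \<omega>"
    and uniform: "\<And>a. 0 \<le> a \<Longrightarrow> a \<le> 1 \<Longrightarrow> prob {\<omega> \<in> space M. X \<omega> \<le> a} = a"
    and close: "\<And>\<omega>. \<omega> \<in> space M \<Longrightarrow> \<bar>Y \<omega> - X \<omega>\<bar> \<le> \<epsilon> + B \<omega>"
    and "0 \<le> \<epsilon>" "0 < \<eta>" "0 \<le> \<alpha>" "\<alpha> \<le> 1"
  shows "\<bar>prob {\<omega> \<in> space M. Y \<omega> \<le> \<alpha>} - \<alpha>\<bar> \<le> \<epsilon> + \<eta> + expectation B / \<eta>"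
proof -
  have [measurable]: "B \<in> borel_measurable M"
    using B_int by blast
  define bad where "bad = {\<omega> \<in> space M. \<eta> \<le> B \<omega>}"
  have prob_bad: "prob bad \<le> expectation B / \<eta>"
    unfolding bad_def using B_int B_nonneg \<open>0 < \<eta>\<close>
    by (intro integral_Markov_inequality_measure[OF _ sets.top]) auto
  have uniform_le: "prob {\<omega> \<in> space M. X \<omega> \<le> a} \<le> a" if "0 \<le> a" for a
    using uniform[OF that] prob_le_1[of "{\<omega> \<in> space M. X \<omega> \<le> a}"] by (cases "a \<le> 1") linarith+
  have uniform_ge: "a \<le> prob {\<omega> \<in> space M. X \<omega> \<le> a}" if "a \<le> 1" for a
    using uniform[OF _ that] measure_nonneg[of M "{\<omega> \<in> space M. X \<omega> \<le> a}"]
    by (cases "0 \<le> a") linarith+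
  let ?Y = "{\<omega> \<in> space M. Y \<omega> \<le> \<alpha>}" and ?X = "\<lambda>a. {\<omega> \<in> space M. X \<omega> \<le> a}"
  have [measurable]: "bad \<in> events"
    unfolding bad_def by measurable
  have "prob ?Y \<le> prob (?X (\<alpha> + \<epsilon> + \<eta>) \<union> bad)"
    using close by (intro finite_measure_mono) (force simp: bad_def)+
  also have "\<dots> \<le> prob (?X (\<alpha> + \<epsilon> + \<eta>)) + prob bad"
    by (rule measure_Un_le) measurable
  also have "\<dots> \<le> \<alpha> + \<epsilon> + \<eta> + prob bad"
    using uniform_le[of "\<alpha> + \<epsilon> + \<eta>"] assms(7-9) by simp
  finally have upper: "prob ?Y \<le> \<alpha> + \<epsilon> + \<eta> + prob bad" .
  have "\<alpha> - \<epsilon> - \<eta> \<le> prob (?X (\<alpha> - \<epsilon> - \<eta>))"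
    using uniform_ge assms(7-10) by simp
  also have "\<dots> \<le> prob (?Y \<union> bad)"
    using close by (intro finite_measure_mono) (force simp: bad_def)+
  also have "\<dots> \<le> prob ?Y + prob bad"
    by (rule measure_Un_le) measurable
  finally have lower: "\<alpha> - \<epsilon> - \<eta> \<le> prob ?Y + prob bad" .
  show ?thesis
    using upper lower prob_bad measure_nonneg[of M bad] by linarith
qed

section \<open>The partially Bayes model\<close>

lemma sets_restrict_space_dist_gt:
  fixes c :: "'v::metric_space"
  shows "{\<nu> \<in> V. \<delta> < dist \<nu> c} \<in> sets (restrict_space borel V)"
proof -
  have "{\<nu>. \<delta> < dist \<nu> c} \<in> sets borel"
    by (intro borel_open open_Collect_less continuous_intros)
  then show ?thesis
    unfolding sets_restrict_space by (auto intro!: image_eqI[of _ _ "{\<nu>. \<delta> < dist \<nu> c}"])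
qed

lemma limsup_eq_0_if_eventually_le:
  fixes f :: "nat \<Rightarrow> ennreal"
  assumes "\<And>\<epsilon>. 0 < \<epsilon> \<Longrightarrow> eventually (\<lambda>K. f K \<le> ennreal \<epsilon>) sequentially"
  shows "limsup f = 0"
proof -
  have "limsup f \<le> 0"
  proof (rule ennreal_le_epsilon)
    fix \<epsilon> :: real assume "0 < \<epsilon>"
    then show "limsup f \<le> 0 + ennreal \<epsilon>"
      using Limsup_bounded[OF assms] by simp
  qed
  then show ?thesis
    by simp
qed

locale partially_bayes_model =
  fixes n :: nat and V :: "'v::metric_space set" and MU :: "nat \<Rightarrow> 'u measure"
    and kern :: "nat \<Rightarrow> 'th \<Rightarrow> 'v \<Rightarrow> (real \<times> 'u) measure"
    and condT :: "nat \<Rightarrow> 'v \<Rightarrow> 'u \<Rightarrow> real measure"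
    and \<theta>0 :: 'th and \<theta>s :: "nat \<Rightarrow> 'th" and \<nu>s :: "nat \<Rightarrow> 'v"
    and post :: "nat \<Rightarrow> nat \<Rightarrow> (nat \<Rightarrow> 'u) \<Rightarrow> 'v measure"
  assumes compact_V: "compact V"
    and kern_prob: "\<And>K \<theta>. kern K \<theta> \<in> restrict_space borel V \<rightarrow>\<^sub>M prob_algebra (borel \<Otimes>\<^sub>M MU K)"
    and condT_kernel: "\<And>K \<nu>. \<nu> \<in> V \<Longrightarrow> condT K \<nu> \<in> MU K \<rightarrow>\<^sub>M prob_algebra borel"
    and condT_disint: "\<And>K \<nu> A B. \<nu> \<in> V \<Longrightarrow> A \<in> sets borel \<Longrightarrow> B \<in> sets (MU K) \<Longrightarrow>
       emeasure (kern K \<theta>0 \<nu>) (A \<times> B)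
         = (\<integral>\<^sup>+ u. indicator B u * emeasure (condT K \<nu> u) A \<partial>distr (kern K \<theta>0 \<nu>) (MU K) snd)"
    and condT_abs_cont: "\<And>K \<nu> u. \<nu> \<in> V \<Longrightarrow> u \<in> space (MU K) \<Longrightarrow>
       absolutely_continuous lborel (condT K \<nu> u)"
    and oracle_pval_equicont: "\<forall>\<epsilon>>0. \<exists>\<delta>>0. \<forall>K t u \<nu> \<nu>'. u \<in> space (MU K) \<longrightarrow> \<nu> \<in> V \<longrightarrow> \<nu>' \<in> V \<longrightarrow>
       dist \<nu> \<nu>' < \<delta> \<longrightarrow> \<bar>oracle_pval condT K t u \<nu> - oracle_pval condT K t u \<nu>'\<bar> < \<epsilon>"
    and post_kernel: "\<And>K i. i < n \<Longrightarrow>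
       post K i \<in> PiM {..<n} (\<lambda>_. MU K) \<rightarrow>\<^sub>M prob_algebra (restrict_space borel V)"
    and truth: "\<And>i. i < n \<Longrightarrow> \<nu>s i \<in> V"
begin

abbreviation D :: "nat \<Rightarrow> (nat \<Rightarrow> real \<times> 'u) measure" where
  "D K \<equiv> data_law kern n \<theta>s \<nu>s K"

abbreviation P_pB :: "nat \<Rightarrow> nat \<Rightarrow> (nat \<Rightarrow> real \<times> 'u) \<Rightarrow> real" where
  "P_pB K i \<omega> \<equiv> pB_pval condT (post K i) K i (fst (\<omega> i)) (Uvec n \<omega>)"

abbreviation P_or :: "nat \<Rightarrow> nat \<Rightarrow> (nat \<Rightarrow> real \<times> 'u) \<Rightarrow> real" where
  "P_or K i \<omega> \<equiv> oracle_pval condT K (fst (\<omega> i)) (snd (\<omega> i)) (\<nu>s i)"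

abbreviation post_far :: "nat \<Rightarrow> nat \<Rightarrow> real \<Rightarrow> (nat \<Rightarrow> real \<times> 'u) \<Rightarrow> real" where
  "post_far K i \<delta> \<omega> \<equiv> measure (post K i (Uvec n \<omega>)) {\<nu> \<in> V. dist \<nu> (\<nu>s i) > \<delta>}"

lemma condT_prob_space:
  assumes "\<nu> \<in> V" "u \<in> space (MU K)"
  shows "prob_space (condT K \<nu> u)" and "sets (condT K \<nu> u) = sets borel"
  using measurable_space[OF condT_kernel[OF assms(1)] assms(2)] by (auto simp: space_prob_algebra)

lemma oracle_pval_bounded:
  assumes "\<nu> \<in> V" "u \<in> space (MU K)"
  shows "0 \<le> oracle_pval condT K t u \<nu> \<and> oracle_pval condT K t u \<nu> \<le> 1"
  using condT_prob_space[OF assms] by (simp add: oracle_pval_def prob_space.prob_le_1)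

lemma continuous_on_oracle_pval: "continuous_on V (oracle_pval condT K t u)"
  if "u \<in> space (MU K)"
  unfolding continuous_on_iff dist_real_def using oracle_pval_equicont that by metis

lemma measurable_oracle_pval:
  assumes "\<nu> \<in> V"
  shows "(\<lambda>z. oracle_pval condT K (fst z) (snd z) \<nu>) \<in> borel_measurable (borel \<Otimes>\<^sub>M MU K)"
proof -
  let ?M = "((borel :: real measure) \<Otimes>\<^sub>M MU K) \<Otimes>\<^sub>M (borel :: real measure)"
  have abs_t: "(\<lambda>p. \<bar>fst (fst p)\<bar>) \<in> borel_measurable ?M"
    and abs_s: "(\<lambda>p. \<bar>snd p\<bar>) \<in> borel_measurable ?M"
    by (intro borel_measurable_abs measurable_compose[OF measurable_fst measurable_fst] measurable_snd)+
  have "{p \<in> space ?M. \<bar>fst (fst p)\<bar> \<le> \<bar>snd p\<bar>} \<in> sets ?M"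
    by (rule borel_measurable_le[OF abs_t abs_s])
  moreover have "(SIGMA z:space (borel \<Otimes>\<^sub>M MU K). {s. \<bar>fst z\<bar> \<le> \<bar>s\<bar>}) =
      {p \<in> space ?M. \<bar>fst (fst p)\<bar> \<le> \<bar>snd p\<bar>}"
    by (auto simp: space_pair_measure)
  ultimately show ?thesis
    unfolding oracle_pval_def
    by (intro measure_measurable_prob_algebra2[where N=borel])
       (auto intro: measurable_compose[OF measurable_snd condT_kernel[OF assms]])
qed

lemma oracle_pval_uniform:
  assumes "\<nu> \<in> V" "0 \<le> a" "a \<le> 1"
  shows "measure (kern K \<theta>0 \<nu>) {z \<in> space (borel \<Otimes>\<^sub>M MU K). oracle_pval condT K (fst z) (snd z) \<nu> \<le> a} = a"
proof -
  define E where "E = {z \<in> space (borel \<Otimes>\<^sub>M MU K). oracle_pval condT K (fst z) (snd z) \<nu> \<le> a}"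
  have E: "E \<in> sets (borel \<Otimes>\<^sub>M MU K)"
    unfolding E_def using measurable_oracle_pval[OF assms(1)] by measurable
  have kern: "kern K \<theta>0 \<nu> \<in> space (prob_algebra (borel \<Otimes>\<^sub>M MU K))"
    using measurable_space[OF kern_prob] assms(1) by (simp add: space_restrict_space)
  let ?U = "distr (kern K \<theta>0 \<nu>) (MU K) snd"
  have "prob_space ?U"
    using kern by (intro prob_space.prob_space_distr)
      (auto simp: space_prob_algebra measurable_cong_sets[of "kern K \<theta>0 \<nu>" "borel \<Otimes>\<^sub>M MU K"])
  have "emeasure (kern K \<theta>0 \<nu>) E = (\<integral>\<^sup>+ u. emeasure (condT K \<nu> u) {t. (t, u) \<in> E} \<partial>?U)"
    by (rule emeasure_disintegration[OF kern condT_kernel[OF assms(1)] condT_disint[OF assms(1)] E])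
  also have "\<dots> = (\<integral>\<^sup>+ u. ennreal a \<partial>?U)"
  proof (rule nn_integral_cong)
    fix u assume "u \<in> space ?U"
    then have u: "u \<in> space (MU K)"
      by simp
    have "{t. (t, u) \<in> E} = {t. measure (condT K \<nu> u) {s. \<bar>t\<bar> \<le> \<bar>s\<bar>} \<le> a}"
      using u by (auto simp: E_def oracle_pval_def space_pair_measure)
    then show "emeasure (condT K \<nu> u) {t. (t, u) \<in> E} = ennreal a"
      using measure_tail_pval_le[OF condT_prob_space[OF assms(1) u] condT_abs_cont[OF assms(1) u] assms(2,3)]
        condT_prob_space[OF assms(1) u]
      by (simp add: prob_space_def finite_measure.emeasure_eq_measure)
  qed
  also have "\<dots> = ennreal a"
    using prob_space.emeasure_space_1[OF \<open>prob_space ?U\<close>] by simp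
  finally show ?thesis
    using assms(2) by (simp add: E_def measure_def)
qed

lemma data_component_prob_algebra:
  "i < n \<Longrightarrow> kern K (\<theta>s i) (\<nu>s i) \<in> space (prob_algebra (borel \<Otimes>\<^sub>M MU K))"
  using measurable_space[OF kern_prob] truth by (simp add: space_restrict_space)

lemma prob_space_data_law: "prob_space (D K)"
  unfolding data_law_def
  by (intro prob_space_PiM) (auto dest: data_component_prob_algebra[of _ K] simp: space_prob_algebra)

lemma sets_data_law: "sets (D K) = sets (PiM {..<n} (\<lambda>_. borel \<Otimes>\<^sub>M MU K))"
  unfolding data_law_def
  by (intro sets_PiM_cong) (auto dest: data_component_prob_algebra[of _ K] simp: space_prob_algebra)

lemma measurable_data_component: "i < n \<Longrightarrow> (\<lambda>\<omega>. \<omega> i) \<in> D K \<rightarrow>\<^sub>M borel \<Otimes>\<^sub>M MU K"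
  by (simp add: measurable_cong_sets[OF sets_data_law refl])

lemma distr_data_component:
  "i < n \<Longrightarrow> distr (D K) (kern K (\<theta>s i) (\<nu>s i)) (\<lambda>\<omega>. \<omega> i) = kern K (\<theta>s i) (\<nu>s i)"
  unfolding data_law_def
  by (intro distr_PiM_component) (auto dest: data_component_prob_algebra[of _ K] simp: space_prob_algebra)

lemma measurable_Uvec: "Uvec n \<in> D K \<rightarrow>\<^sub>M PiM {..<n} (\<lambda>_. MU K)"
  unfolding Uvec_def
  by (rule measurable_restrict) (auto intro: measurable_compose[OF measurable_data_component measurable_snd])

lemma measurable_pB_pval:
  assumes "i < n"
  shows "(\<lambda>x. pB_pval condT (post K i) K i (fst x) (snd x)) \<in> borel_measurable (borel \<Otimes>\<^sub>M PiM {..<n} (\<lambda>_. MU K))"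
proof -
  let ?X = "(borel :: real measure) \<Otimes>\<^sub>M PiM {..<n} (\<lambda>_. MU K)"
  have component: "(\<lambda>x. (fst x, snd x i)) \<in> ?X \<rightarrow>\<^sub>M borel \<Otimes>\<^sub>M MU K"
    using assms by (intro measurable_Pair[OF measurable_fst]
        measurable_compose[OF measurable_snd measurable_component_singleton]) simp
  have component_space: "snd x i \<in> space (MU K)" if "x \<in> space ?X" for x
  proof -
    have "snd x \<in> space (PiM {..<n} (\<lambda>_. MU K))"
      using that by (simp add: space_pair_measure mem_Times_iff)
    then show ?thesis
      using assms by (metis PiE_mem space_PiM lessThan_iff)
  qed
  show ?thesis
    unfolding pB_pval_def
  proof (rule borel_measurable_kernel_integral_continuous[OF compact_V])
    show "V \<noteq> {}"
      using truth assms by blast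
    show "(\<lambda>x. oracle_pval condT K (fst x) (snd x i) c) \<in> borel_measurable ?X" if "c \<in> V" for c
      using measurable_compose[OF component measurable_oracle_pval[OF that]] by simp
    show "continuous_on V (oracle_pval condT K (fst x) (snd x i))" if "x \<in> space ?X" for x
      by (rule continuous_on_oracle_pval[OF component_space[OF that]])
    show "0 \<le> oracle_pval condT K (fst x) (snd x i) \<nu>" if "x \<in> space ?X" "\<nu> \<in> V" for x \<nu>
      using oracle_pval_bounded[OF that(2) component_space[OF that(1)]] by simp
    show "(\<lambda>x. post K i (snd x)) \<in> ?X \<rightarrow>\<^sub>M prob_algebra (restrict_space borel V)"
      by (rule measurable_compose[OF measurable_snd post_kernel[OF assms]])
  qed
qed

lemma post_data_prob_algebra:
  "i < n \<Longrightarrow> \<omega> \<in> space (D K) \<Longrightarrow> post K i (Uvec n \<omega>) \<in> space (prob_algebra (restrict_space borel V))"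
  using measurable_space[OF post_kernel measurable_space[OF measurable_Uvec]] .

lemma oracle_pval_data_uniform:
  assumes "i < n" "\<theta>s i = \<theta>0" "0 \<le> a" "a \<le> 1"
  shows "measure (D K) {\<omega> \<in> space (D K). P_or K i \<omega> \<le> a} = a"
proof -
  let ?k = "kern K \<theta>0 (\<nu>s i)"
  define E where "E = {z \<in> space (borel \<Otimes>\<^sub>M MU K). oracle_pval condT K (fst z) (snd z) (\<nu>s i) \<le> a}"
  have sets_k: "sets ?k = sets (borel \<Otimes>\<^sub>M MU K)"
    using data_component_prob_algebra[OF assms(1), of K] assms(2) by (simp add: space_prob_algebra)
  have "E \<in> sets ?k"
    unfolding sets_k E_def using measurable_oracle_pval[OF truth[OF assms(1)]] by measurable
  moreover have "(\<lambda>\<omega>. \<omega> i) \<in> D K \<rightarrow>\<^sub>M ?k"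
    using measurable_data_component[OF assms(1)] by (simp add: measurable_cong_sets[OF refl sets_k])
  moreover have "{\<omega> \<in> space (D K). P_or K i \<omega> \<le> a} = (\<lambda>\<omega>. \<omega> i) -` E \<inter> space (D K)"
    using measurable_space[OF measurable_data_component[OF assms(1)]] by (auto simp: E_def)
  ultimately have "measure (D K) {\<omega> \<in> space (D K). P_or K i \<omega> \<le> a}
      = measure (distr (D K) ?k (\<lambda>\<omega>. \<omega> i)) E"
    by (simp add: measure_distr)
  also have "\<dots> = measure ?k E"
    using distr_data_component[OF assms(1)] assms(2) by simp
  also have "\<dots> = a"
    unfolding E_def by (rule oracle_pval_uniform[OF truth[OF assms(1)] assms(3,4)])
  finally show ?thesis .
qed

lemma pB_pval_close_to_oracle:
  assumes "i < n" and \<omega>: "\<omega> \<in> space (D K)" and "0 \<le> \<epsilon>"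
    and close: "\<And>t u \<nu>. u \<in> space (MU K) \<Longrightarrow> \<nu> \<in> V \<Longrightarrow> dist \<nu> (\<nu>s i) \<le> \<delta> \<Longrightarrow>
       \<bar>oracle_pval condT K t u \<nu> - oracle_pval condT K t u (\<nu>s i)\<bar> \<le> \<epsilon>"
  shows "\<bar>P_pB K i \<omega> - P_or K i \<omega>\<bar> \<le> \<epsilon> + post_far K i \<delta> \<omega>"
proof -
  let ?\<mu> = "post K i (Uvec n \<omega>)" and ?t = "fst (\<omega> i)" and ?u = "snd (\<omega> i)"
  let ?f = "oracle_pval condT K ?t ?u" and ?far = "{\<nu> \<in> V. dist \<nu> (\<nu>s i) > \<delta>}"
  have u: "?u \<in> space (MU K)"
    using measurable_space[OF measurable_data_component[OF assms(1)] \<omega>] by (auto simp: space_pair_measure)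
  have "prob_space ?\<mu>" and sets_\<mu>: "sets ?\<mu> = sets (restrict_space borel V)"
    using post_data_prob_algebra[OF assms(1) \<omega>] by (auto simp: space_prob_algebra)
  interpret \<mu>: prob_space ?\<mu> by fact
  have space_\<mu>: "space ?\<mu> = V"
    using sets_eq_imp_space_eq[OF sets_\<mu>] by (simp add: space_restrict_space)
  have "?f \<in> borel_measurable ?\<mu>"
    using borel_measurable_continuous_on_restrict[OF continuous_on_oracle_pval[OF u]]
    by (subst measurable_cong_sets[OF sets_\<mu> refl])
  then have "integrable ?\<mu> ?f"
    using oracle_pval_bounded[OF _ u] by (intro \<mu>.integrable_const_bound[where B=1]) (auto simp: space_\<mu>)
  moreover have "?far \<in> \<mu>.events"
    unfolding sets_\<mu> by (rule sets_restrict_space_dist_gt)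
  moreover have "\<bar>?f \<nu> - ?f (\<nu>s i)\<bar> \<le> \<epsilon> + indicator ?far \<nu>" if "\<nu> \<in> space ?\<mu>" for \<nu>
  proof (cases "dist \<nu> (\<nu>s i) \<le> \<delta>")
    case True
    then show ?thesis
      using close[OF u _ True] that by (simp add: space_\<mu> indicator_def)
  next
    case False
    then show ?thesis
      using that oracle_pval_bounded[OF _ u, of \<nu> ?t] oracle_pval_bounded[OF truth[OF assms(1)] u, of ?t] \<open>0 \<le> \<epsilon>\<close>
      by (auto simp: space_\<mu> indicator_def)
  qed
  ultimately have "\<bar>\<mu>.expectation ?f - ?f (\<nu>s i)\<bar> \<le> \<epsilon> + \<mu>.prob ?far"
    by (rule \<mu>.abs_expectation_diff_le)
  moreover have "Uvec n \<omega> i = ?u"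
    using assms(1) by (simp add: Uvec_def)
  ultimately show ?thesis
    by (simp add: pB_pval_def)
qed

lemma pB_pval_calibration:
  assumes "i < n" "\<theta>s i = \<theta>0" "0 \<le> \<epsilon>" "0 < \<eta>" "0 \<le> \<alpha>" "\<alpha> \<le> 1"
    and close: "\<And>t u \<nu>. u \<in> space (MU K) \<Longrightarrow> \<nu> \<in> V \<Longrightarrow> dist \<nu> (\<nu>s i) \<le> \<delta> \<Longrightarrow>
       \<bar>oracle_pval condT K t u \<nu> - oracle_pval condT K t u (\<nu>s i)\<bar> \<le> \<epsilon>"
  shows "\<bar>measure (D K) {\<omega> \<in> space (D K). P_pB K i \<omega> \<le> \<alpha>} - \<alpha>\<bar> \<le> \<epsilon> + \<eta> + (\<integral>\<omega>. post_far K i \<delta> \<omega> \<partial>D K) / \<eta>"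
proof -
  interpret prob_space "D K"
    by (rule prob_space_data_law)
  have "P_or K i \<in> borel_measurable (D K)"
    using measurable_compose[OF measurable_data_component measurable_oracle_pval[OF truth]] assms(1) by simp
  moreover have "P_pB K i \<in> borel_measurable (D K)"
    using measurable_compose[OF measurable_Pair[OF measurable_compose[OF measurable_data_component measurable_fst]
        measurable_Uvec] measurable_pB_pval] assms(1) by simp
  moreover have "integrable (D K) (post_far K i \<delta>)"
  proof (rule integrable_const_bound[where B=1])
    show "post_far K i \<delta> \<in> borel_measurable (D K)"
      by (rule measurable_compose[OF measurable_Uvec measurable_compose[OF post_kernel[OF assms(1)]
          measurable_measure_prob_algebra[OF sets_restrict_space_dist_gt]]])
    show "AE \<omega> in D K. norm (post_far K i \<delta> \<omega>) \<le> 1"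
      using post_data_prob_algebra[OF assms(1)] by (auto simp: space_prob_algebra prob_space.prob_le_1)
  qed
  ultimately show ?thesis
    using oracle_pval_data_uniform[OF assms(1,2)] pB_pval_close_to_oracle[OF assms(1) _ assms(3) close]
    by (intro prob_le_perturbed_uniform) (auto simp: assms)
qed

lemma eventually_calibration_error_le:
  assumes concentration: "\<And>i \<delta>. i < n \<Longrightarrow> \<theta>s i = \<theta>0 \<Longrightarrow> \<delta> > 0 \<Longrightarrow>
      (\<lambda>K. \<integral>\<omega>. post_far K i \<delta> \<omega> \<partial>D K) \<longlonglongrightarrow> 0"
    and "0 < \<epsilon>"
  shows "\<forall>\<^sub>F K in sequentially. (\<Squnion>i\<in>{i. i < n \<and> \<theta>s i = \<theta>0}. \<Squnion>\<alpha>\<in>{0..1::real}.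
      ennreal \<bar>measure (D K) {\<omega> \<in> space (D K). P_pB K i \<omega> \<le> \<alpha>} - \<alpha>\<bar>) \<le> ennreal \<epsilon>"
proof -
  define e where "e = \<epsilon> / 3"
  have "0 < e"
    using \<open>0 < \<epsilon>\<close> by (simp add: e_def)
  then obtain \<delta> where "\<delta> > 0" and \<delta>: "\<And>K t u \<nu> \<nu>'. u \<in> space (MU K) \<Longrightarrow> \<nu> \<in> V \<Longrightarrow> \<nu>' \<in> V \<Longrightarrow>
      dist \<nu> \<nu>' < \<delta> \<Longrightarrow> \<bar>oracle_pval condT K t u \<nu> - oracle_pval condT K t u \<nu>'\<bar> < e"
    using oracle_pval_equicont by metis
  let ?H0 = "{i. i < n \<and> \<theta>s i = \<theta>0}"
  have "\<forall>\<^sub>F K in sequentially. \<forall>i\<in>?H0. (\<integral>\<omega>. post_far K i (\<delta> / 2) \<omega> \<partial>D K) < e * e"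
  proof (intro eventually_ball_finite ballI)
    fix i assume "i \<in> ?H0"
    then have "(\<lambda>K. \<integral>\<omega>. post_far K i (\<delta> / 2) \<omega> \<partial>D K) \<longlonglongrightarrow> 0"
      using concentration[of i "\<delta> / 2"] \<open>0 < \<delta>\<close> by simp
    then show "\<forall>\<^sub>F K in sequentially. (\<integral>\<omega>. post_far K i (\<delta> / 2) \<omega> \<partial>D K) < e * e"
      using \<open>0 < e\<close> by (intro order_tendstoD(2)) auto
  qed simp
  then show ?thesis
  proof eventually_elim
    case (elim K)
    show ?case
    proof (intro SUP_least ennreal_leI)
      fix i \<alpha> assume i: "i \<in> ?H0" and \<alpha>: "\<alpha> \<in> {0..1::real}"
      have "\<bar>measure (D K) {\<omega> \<in> space (D K). P_pB K i \<omega> \<le> \<alpha>} - \<alpha>\<bar>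
          \<le> e + e + (\<integral>\<omega>. post_far K i (\<delta> / 2) \<omega> \<partial>D K) / e"
        using i \<alpha> \<open>0 < e\<close> \<open>0 < \<delta>\<close> truth \<delta>[THEN less_imp_le]
        by (intro pB_pval_calibration) auto
      also have "\<dots> \<le> \<epsilon>"
        using elim i \<open>0 < e\<close> by (auto simp: e_def field_simps)
      finally show "\<bar>measure (D K) {\<omega> \<in> space (D K). P_pB K i \<omega> \<le> \<alpha>} - \<alpha>\<bar> \<le> \<epsilon>" .
    qed
  qed
qed

end

theorem theorem2:
  fixes n :: nat
    and V :: "'v::metric_space set"
    and MU :: "nat \<Rightarrow> 'u measure"
    and kern :: "nat \<Rightarrow> 'th \<Rightarrow> 'v \<Rightarrow> (real \<times> 'u) measure"
    and condT :: "nat \<Rightarrow> 'v \<Rightarrow> 'u \<Rightarrow> real measure"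
    and \<theta>0 :: 'th and \<theta>s :: "nat \<Rightarrow> 'th" and \<nu>s :: "nat \<Rightarrow> 'v"
    and Prior :: "'v measure measure"
    and post :: "nat \<Rightarrow> nat \<Rightarrow> (nat \<Rightarrow> 'u) \<Rightarrow> 'v measure"
  defines "MV \<equiv> restrict_space borel V"
  assumes A2: "compact V"
    and kern_prob: "\<And>K \<theta>. kern K \<theta> \<in> MV \<rightarrow>\<^sub>M prob_algebra (borel \<Otimes>\<^sub>M MU K)"
    and U_law: "\<And>K \<theta> \<theta>' \<nu>. \<nu> \<in> V \<Longrightarrow>
       distr (kern K \<theta> \<nu>) (MU K) snd = distr (kern K \<theta>' \<nu>) (MU K) snd"
    and condT_kernel: "\<And>K \<nu>. \<nu> \<in> V \<Longrightarrow> condT K \<nu> \<in> MU K \<rightarrow>\<^sub>M prob_algebra borel"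
    and condT_disint: "\<And>K \<nu> A B. \<nu> \<in> V \<Longrightarrow> A \<in> sets borel \<Longrightarrow> B \<in> sets (MU K) \<Longrightarrow>
       emeasure (kern K \<theta>0 \<nu>) (A \<times> B)
         = (\<integral>\<^sup>+ u. indicator B u * emeasure (condT K \<nu> u) A \<partial>distr (kern K \<theta>0 \<nu>) (MU K) snd)"
    and A1: "\<And>K \<nu> u. \<nu> \<in> V \<Longrightarrow> u \<in> space (MU K) \<Longrightarrow> absolutely_continuous lborel (condT K \<nu> u)"
    and A3: "\<forall>\<epsilon>>0. \<exists>\<delta>>0. \<forall>K t u \<nu> \<nu>'. u \<in> space (MU K) \<longrightarrow> \<nu> \<in> V \<longrightarrow> \<nu>' \<in> V \<longrightarrow>
       dist \<nu> \<nu>' < \<delta> \<longrightarrow> \<bar>oracle_pval condT K t u \<nu> - oracle_pval condT K t u \<nu>'\<bar> < \<epsilon>"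
    and prior: "Prior \<in> space (prob_algebra (prob_algebra MV))"
    and posterior: "\<And>K i. i < n \<Longrightarrow> is_posterior_version kern MU \<theta>0 MV Prior n K i (post K i)"
    and truth: "\<And>i. i < n \<Longrightarrow> \<nu>s i \<in> V"
    and concentration: "\<And>i \<delta>. i < n \<Longrightarrow> \<theta>s i = \<theta>0 \<Longrightarrow> \<delta> > 0 \<Longrightarrow>
       (\<lambda>K. \<integral>\<omega>. measure (post K i (Uvec n \<omega>)) {\<nu> \<in> V. dist \<nu> (\<nu>s i) > \<delta>}
               \<partial>data_law kern n \<theta>s \<nu>s K) \<longlonglongrightarrow> 0"
  shows "limsup (\<lambda>K. \<Squnion>i\<in>{i. i < n \<and> \<theta>s i = \<theta>0}. \<Squnion>\<alpha>\<in>{0..1::real}.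
           ennreal \<bar>measure (data_law kern n \<theta>s \<nu>s K)
              {\<omega> \<in> space (data_law kern n \<theta>s \<nu>s K).
                 pB_pval condT (post K i) K i (fst (\<omega> i)) (Uvec n \<omega>) \<le> \<alpha>} - \<alpha>\<bar>) = 0"
proof -
  \<comment> \<open>The posterior enters only through its measurability and the concentration hypothesis.\<close>
  interpret partially_bayes_model n V MU kern condT \<theta>0 \<theta>s \<nu>s post
    using A2 kern_prob condT_kernel condT_disint A1 A3 posterior truth
    by unfold_locales (auto simp: MV_def is_posterior_version_def)
  show ?thesis
    using concentration by (intro limsup_eq_0_if_eventually_le eventually_calibration_error_le) auto
qed

end
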